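(* Let $\tau>3$. For Lebesgue-almost every $\gamma>0$ the following holds: if $\alpha$ is an isolated point of $D_{\gamma,\tau}$, with convergents $p_n/q_n$, then there exists $N\in\mathbb{N}$ such that for every even $m>N$ there is an even $n<m$ with $$\frac{p_n}{q_n}+\frac{\gamma}{q_n^{\tau+1}}\ge\frac{p_m}{q_m}-\frac{\gamma}{q_m^{\tau+1}}-\frac{2\gamma}{q_m^{\tau-1}}.$$
   Context: For $x\in\mathbb{R}$, $\|x\|:=\min_{p\in\mathbb{Z}}|x-p|$; $\mathbb{N}=\{1,2,\dots\}$. For $\gamma>0,\tau\ge1$, $D_{\gamma,\tau}:=\{\alpha\in(0,1): \|q\alpha\|\ge\gamma/q^\tau\ \forall q\in\mathbb{N}\}$; its elements are irrational. For irrational $\alpha\in(0,1)$ write $\alpha=\cfrac{1}{a_1+\cfrac{1}{a_2+\cdots}}$, and let $p_n/q_n$ ($n\ge0$) be its convergents: $p_{-1}=1,q_{-1}=0,p_0=0,q_0=1$, $p_n=a_np_{n-1}+p_{n-2}$, $q_n=a_nq_{n-1}+q_{n-2}$. *)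

theory Defs
  imports "HOL-Analysis.Analysis"
begin

definition dist_int :: "real \<Rightarrow> real" where
  "dist_int x = (INF p::int. \<bar>x - of_int p\<bar>)"

definition Dset :: "real \<Rightarrow> real \<Rightarrow> real set" where
  "Dset \<gamma> \<tau> = {\<alpha>. 0 < \<alpha> \<and> \<alpha> < 1 \<and>
      (\<forall>q::nat. q \<ge> 1 \<longrightarrow> dist_int (real q * \<alpha>) \<ge> \<gamma> / real q powr \<tau>)}"

fun cf_rem :: "real \<Rightarrow> nat \<Rightarrow> real" where
  "cf_rem \<alpha> 0 = \<alpha>"
| "cf_rem \<alpha> (Suc k) = frac (1 / cf_rem \<alpha> k)"

definition cf_a :: "real \<Rightarrow> nat \<Rightarrow> int" where
  "cf_a \<alpha> n = \<lfloor>1 / cf_rem \<alpha> (n - 1)\<rfloor>"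

text \<open>Shifted indices: cfP a k = p_(k-1), cfQ a k = q_(k-1).\<close>
fun cfP :: "real \<Rightarrow> nat \<Rightarrow> int" where
  "cfP \<alpha> 0 = 1"
| "cfP \<alpha> (Suc 0) = 0"
| "cfP \<alpha> (Suc (Suc k)) = cf_a \<alpha> (Suc k) * cfP \<alpha> (Suc k) + cfP \<alpha> k"

fun cfQ :: "real \<Rightarrow> nat \<Rightarrow> int" where
  "cfQ \<alpha> 0 = 0"
| "cfQ \<alpha> (Suc 0) = 1"
| "cfQ \<alpha> (Suc (Suc k)) = cf_a \<alpha> (Suc k) * cfQ \<alpha> (Suc k) + cfQ \<alpha> k"

definition conv_p :: "real \<Rightarrow> nat \<Rightarrow> int" where "conv_p \<alpha> n = cfP \<alpha> (Suc n)"
definition conv_q :: "real \<Rightarrow> nat \<Rightarrow> int" where "conv_q \<alpha> n = cfQ \<alpha> (Suc n)"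

end

(*
  Fix gamma > 0 and an isolated point alpha of D(gamma, tau), and suppose that for a large even m
  no even convergent p_n/q_n with n < m satisfies the inequality. For large m the window
  [p_m/q_m - gamma/q_m^(tau+1) - 2 gamma/q_m^(tau-1), p_m/q_m - gamma/q_m^(tau+1)] lies in the
  punctured neighbourhood of alpha that misses D, so each of its points z has a good approximation
  |z - p/q| < gamma/q^(tau+1). Comparing p/q with the convergents of alpha (Farey-neighbour
  arithmetic, the Diophantine condition at alpha, and the failed inequality for the earlier even
  convergents) forces q > q_m^(tau-2)/(6 gamma). The intervals of radius gamma/q^(tau+1) around
  such fractions that meet the window have total length at most half the window, so they cannot
  cover it. The argument works for every gamma > 0.
*)

theory Submission
  imports Defs "HOL-Real_Asymp.Real_Asymp"
begin

lemma pos_divide_less_divide_iff: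
  fixes a b c d :: real
  assumes "0 < b" "0 < d"
  shows "a / b < c / d \<longleftrightarrow> a * d < c * b"
  using assms by (simp add: pos_divide_less_eq pos_less_divide_eq mult.commute mult.left_commute)

lemma pos_divide_le_divide_iff:
  fixes a b c d :: real
  assumes "0 < b" "0 < d"
  shows "a / b \<le> c / d \<longleftrightarrow> a * d \<le> c * b"
  using assms by (simp add: pos_divide_le_eq pos_le_divide_eq mult.commute mult.left_commute)

lemma powr_ge_power:
  fixes x :: real
  assumes "1 \<le> x" "real k \<le> s"
  shows "x ^ k \<le> x powr s"
  using powr_mono[OF assms(2,1)] assms(1) by (simp add: powr_realpow)

lemma cubic_le_powr:
  fixes x g t :: real
  assumes "8 \<le> x" "3 \<le> t" "0 \<le> g" "g \<le> 1"
  shows "8 * g * (x ^ 2 * (x - 1)) \<le> x powr (t + 1)"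
proof -
  have "8 * g * (x ^ 2 * (x - 1)) \<le> 8 * (x ^ 2 * x)"
    using assms mult_mono[of g 1 "x ^ 2 * (x - 1)" "x ^ 2 * x"] by simp
  also have "\<dots> \<le> x * (x ^ 2 * x)" using assms by (intro mult_right_mono) auto
  also have "\<dots> \<le> x powr (t + 1)" using assms powr_ge_power[of x 4 "t + 1"]
    by (simp add: power_numeral_reduce algebra_simps)
  finally show ?thesis .
qed

lemma quadratic_powr_le_powr:
  fixes x y t :: real
  assumes "12 * y \<le> x" "1 \<le> y" "2 \<le> t"
  shows "12 * (x * (x - 1)) * y powr (t - 1) \<le> x powr (t + 1)"
proof -
  have "12 * y powr (t - 1) \<le> 12 powr (t - 1) * y powr (t - 1)"
    using powr_ge_power[of 12 1 "t - 1"] assms by (simp add: mult_right_mono)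
  also have "\<dots> = (12 * y) powr (t - 1)" using assms by (simp add: powr_mult)
  also have "\<dots> \<le> x powr (t - 1)" using assms by (intro powr_mono2) auto
  finally have "12 * (x * (x - 1)) * y powr (t - 1) \<le> x ^ 2 * x powr (t - 1)"
    using assms mult_mono[of "x * (x - 1)" "x ^ 2" "12 * y powr (t - 1)" "x powr (t - 1)"]
    by (simp add: power2_eq_square algebra_simps)
  also have "x ^ 2 * x powr (t - 1) = x powr (t + 1)"
  proof -
    have "x powr (t + 1) = x powr 2 * x powr (t - 1)" by (simp add: add.commute flip: powr_add)
    then show ?thesis using assms by (simp add: powr_realpow)
  qed
  finally show ?thesis .
qed

lemma even_index_crossing:
  fixes f :: "nat \<Rightarrow> real"
  assumes "f 0 \<le> x" "x < f m" "even m"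
  shows "\<exists>n. even n \<and> n + 2 \<le> m \<and> f n \<le> x \<and> x < f (n + 2)"
proof -
  obtain k where "m = 2 * k" using assms(3) by blast
  then show ?thesis using assms(2)
  proof (induction k arbitrary: m)
    case 0
    then show ?case using assms(1) by simp
  next
    case (Suc k)
    show ?case
    proof (cases "f (2 * k) \<le> x")
      case True
      then show ?thesis using Suc.prems by (intro exI[of _ "2 * k"]) auto
    next
      case False
      then show ?thesis using Suc.IH[of "2 * k"] Suc.prems by fastforce
    qed
  qed
qed

section \<open>Fractions\<close>

lemma of_int_fraction_less_iff:
  fixes a b c d :: int
  assumes "0 < b" "0 < d"
  shows "(of_int a / of_int b < (of_int c / of_int d :: real)) \<longleftrightarrow> a * d < c * b"
proof -
  have "0 < real_of_int b" "0 < real_of_int d" using assms by simp_all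
  then have "(of_int a / of_int b < (of_int c / of_int d :: real)) \<longleftrightarrow> of_int a * of_int d < (of_int c * of_int b :: real)"
    by (simp add: divide_less_eq less_divide_eq mult.commute mult.left_commute)
  then show ?thesis by (simp flip: of_int_mult)
qed

lemma fraction_gap:
  fixes p q P Q :: int
  assumes "0 < q" "0 < Q" "of_int P / of_int Q \<noteq> (of_int p / of_int q :: real)"
  shows "1 / (of_int Q * of_int q) \<le> \<bar>of_int p / of_int q - of_int P / of_int Q :: real\<bar>"
proof -
  have "real_of_int P * of_int q \<noteq> of_int p * of_int Q" using assms by (simp add: frac_eq_eq)
  then have "p * Q \<noteq> P * q" by (metis of_int_mult)
  then have "1 \<le> \<bar>p * Q - P * q\<bar>" by linarith
  then have "1 \<le> \<bar>real_of_int (p * Q - P * q)\<bar>" by linarith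
  then have "1 / (of_int Q * of_int q) \<le> \<bar>real_of_int (p * Q - P * q)\<bar> / (of_int Q * of_int q)"
    using assms by (intro divide_right_mono) auto
  also have "\<dots> = \<bar>of_int p / of_int q - of_int P / of_int Q\<bar>"
  proof -
    have "of_int p / of_int q - of_int P / of_int Q = real_of_int (p * Q - P * q) / (of_int Q * of_int q)"
      using assms by (simp add: field_simps)
    then show ?thesis using assms by (simp add: abs_mult)
  qed
  finally show ?thesis .
qed

lemma farey_neighbours_denominator:
  fixes p q P0 Q0 P1 Q1 :: int
  assumes "P1 * Q0 - P0 * Q1 = 1" "0 < Q0" "0 < Q1" "0 < q"
    and "of_int P0 / of_int Q0 < (of_int p / of_int q :: real)" "of_int p / of_int q < (of_int P1 / of_int Q1 :: real)"
  shows "Q0 + Q1 \<le> q"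
proof -
  have "P0 * q < p * Q0" "p * Q1 < P1 * q"
    using assms by (simp_all add: of_int_fraction_less_iff)
  then have "Q1 * 1 \<le> Q1 * (p * Q0 - P0 * q)" "Q0 * 1 \<le> Q0 * (P1 * q - p * Q1)"
    using assms by (intro mult_left_mono; simp)+
  moreover have "Q1 * (p * Q0 - P0 * q) + Q0 * (P1 * q - p * Q1) = q * (P1 * Q0 - P0 * Q1)"
    by (simp add: algebra_simps)
  ultimately show ?thesis using assms(1) by simp
qed

lemma fraction_eq_denominator_ge:
  fixes p q P0 Q0 P1 Q1 :: int
  assumes "\<bar>P1 * Q0 - P0 * Q1\<bar> = 1" "0 < Q0" "0 < q"
    and "of_int p / of_int q = (of_int P0 / of_int Q0 :: real)"
  shows "Q0 \<le> q"
proof -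
  have "p * Q0 = P0 * q" using assms by (simp add: field_simps flip: of_int_mult)
  then have eq: "q * (P1 * Q0 - P0 * Q1) = Q0 * (P1 * q - p * Q1)"
    by (simp add: algebra_simps)
  have "q = \<bar>q * (P1 * Q0 - P0 * Q1)\<bar>" using assms(1,3) by (simp add: abs_mult)
  also have "\<dots> = Q0 * \<bar>P1 * q - p * Q1\<bar>" using eq assms(2) by (simp add: abs_mult)
  finally have q: "q = Q0 * \<bar>P1 * q - p * Q1\<bar>" .
  then have "1 \<le> \<bar>P1 * q - p * Q1\<bar>" using assms(3) by (cases "P1 * q - p * Q1 = 0") auto
  then have "Q0 * 1 \<le> Q0 * \<bar>P1 * q - p * Q1\<bar>" using assms(2) by (intro mult_left_mono) auto
  then show ?thesis using q by simp
qed

section \<open>Good approximations and the Diophantine set\<close>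

lemma dist_int_less_iff: "dist_int x < c \<longleftrightarrow> (\<exists>p. \<bar>x - of_int p\<bar> < c)"
  unfolding dist_int_def by (subst cINF_less_iff) (auto intro: bdd_belowI[of _ 0])

definition good_approx :: "real \<Rightarrow> real \<Rightarrow> real \<Rightarrow> nat \<Rightarrow> int \<Rightarrow> bool" where
  "good_approx \<gamma> \<tau> z q p \<longleftrightarrow> 1 \<le> q \<and> \<bar>z - of_int p / real q\<bar> < \<gamma> / real q powr (\<tau> + 1)"

lemma abs_diff_divide:
  fixes q z :: real
  assumes "0 < q"
  shows "\<bar>z - x / q\<bar> = \<bar>q * z - x\<bar> / q"
proof -
  have "z - x / q = (q * z - x) / q" using assms by (simp add: field_simps)
  then show ?thesis using assms by simp
qed

lemma good_approx_iff:
  "good_approx \<gamma> \<tau> z q p \<longleftrightarrow> 1 \<le> q \<and> \<bar>real q * z - of_int p\<bar> < \<gamma> / real q powr \<tau>"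
proof (cases "1 \<le> q")
  case True
  then have "0 < real q" by simp
  then show ?thesis
    by (simp add: good_approx_def abs_diff_divide powr_add divide_less_cancel field_simps)
qed (simp add: good_approx_def)

lemma Dset_iff_no_good_approx:
  "z \<in> Dset \<gamma> \<tau> \<longleftrightarrow> 0 < z \<and> z < 1 \<and> (\<forall>q p. \<not> good_approx \<gamma> \<tau> z q p)"
proof -
  have *: "\<gamma> / real q powr \<tau> \<le> dist_int (real q * z) \<longleftrightarrow> (\<forall>p. \<not> good_approx \<gamma> \<tau> z q p)"
    if "1 \<le> q" for q
    using that by (simp add: good_approx_iff dist_int_less_iff flip: not_less)
  have "(\<forall>q \<ge> 1. \<gamma> / real q powr \<tau> \<le> dist_int (real q * z)) \<longleftrightarrow> (\<forall>q p. \<not> good_approx \<gamma> \<tau> z q p)"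
  proof (intro iffI allI)
    fix q p
    assume "\<forall>q \<ge> 1. \<gamma> / real q powr \<tau> \<le> dist_int (real q * z)"
    then show "\<not> good_approx \<gamma> \<tau> z q p" using * by (cases "q = 0") (auto simp: good_approx_def)
  qed (use * in auto)
  then show ?thesis unfolding Dset_def by blast
qed

lemma good_approx_close:
  assumes "good_approx \<gamma> \<tau> z q p" "\<gamma> \<le> 1" "0 \<le> \<tau>"
  shows "\<bar>real q * z - of_int p\<bar> < 1"
proof -
  have "1 \<le> real q" using assms(1) by (simp add: good_approx_def)
  then have "\<gamma> / real q powr \<tau> \<le> 1"
    using assms(2,3) ge_one_powr_ge_zero[of "real q" \<tau>] by (simp add: divide_le_eq)
  moreover have "\<bar>real q * z - of_int p\<bar> < \<gamma> / real q powr \<tau>"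
    using assms(1) by (simp add: good_approx_iff)
  ultimately show ?thesis by linarith
qed

lemma good_approx_fraction_dist:
  fixes P Q :: int
  assumes "good_approx \<gamma> \<tau> z q p" "0 < Q" "of_int P / of_int Q \<noteq> of_int p / real q"
    and "\<bar>of_int P / of_int Q - of_int p / real q\<bar> \<le> \<bar>z - of_int p / real q\<bar>"
  shows "real q powr \<tau> < \<gamma> * of_int Q"
proof -
  have q: "0 < real q" using assms(1) by (simp add: good_approx_def)
  have "1 / (of_int Q * real q) \<le> \<bar>of_int P / of_int Q - of_int p / real q\<bar>"
    using fraction_gap[of "int q" Q P p] assms(1-3) by (simp add: good_approx_def abs_minus_commute)
  also have "\<dots> < \<gamma> / real q powr (\<tau> + 1)"
    using assms(1,4) by (simp add: good_approx_def)
  also have "\<dots> = \<gamma> / (real q * real q powr \<tau>)" using q by (simp add: powr_add mult.commute)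
  finally show ?thesis using q assms(2) by (simp add: field_simps)
qed

lemma Dset_bounds:
  assumes "\<alpha> \<in> Dset \<gamma> \<tau>" "0 < \<gamma>"
  shows "0 < \<alpha>" "\<alpha> < 1" "\<gamma> \<le> \<alpha>" "\<alpha> \<notin> \<rat>"
proof -
  show "0 < \<alpha>" "\<alpha> < 1" using assms(1) by (auto simp: Dset_iff_no_good_approx)
  show "\<gamma> \<le> \<alpha>"
  proof -
    have "\<not> good_approx \<gamma> \<tau> \<alpha> 1 0" using assms(1) by (simp add: Dset_iff_no_good_approx)
    then show ?thesis using \<open>0 < \<alpha>\<close> by (simp add: good_approx_iff)
  qed
  show "\<alpha> \<notin> \<rat>"
  proof
    assume "\<alpha> \<in> \<rat>"
    then obtain a b where "0 < b" "\<alpha> = of_int a / of_int b" by (rule Rats_cases')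
    then have "good_approx \<gamma> \<tau> \<alpha> (nat b) a" using assms(2) by (simp add: good_approx_iff)
    then show False using assms(1) by (simp add: Dset_iff_no_good_approx)
  qed
qed

section \<open>Convergents\<close>

context
  fixes \<alpha> :: real
  assumes alpha_pos: "0 < \<alpha>" and alpha_lt_1: "\<alpha> < 1" and alpha_irrational: "\<alpha> \<notin> \<rat>"
begin

lemma cf_rem_bounds: "0 < cf_rem \<alpha> k \<and> cf_rem \<alpha> k < 1 \<and> cf_rem \<alpha> k \<notin> \<rat>"
proof (induction k)
  case 0
  then show ?case using alpha_pos alpha_lt_1 alpha_irrational by simp
next
  case (Suc k)
  define r where "r = cf_rem \<alpha> k"
  have r: "0 < r" "r \<notin> \<rat>" using Suc r_def by auto
  have "1 / r \<notin> \<rat>"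
    using r Rats_inverse[of "1 / r"] by auto
  then have irr: "frac (1 / r) \<notin> \<rat>"
    using Rats_add[OF _ Rats_of_int, of "frac (1 / r)" "\<lfloor>1 / r\<rfloor>"] by (auto simp: frac_def)
  then have "frac (1 / r) \<noteq> 0" by (metis Rats_0)
  then show ?case using irr frac_ge_0[of "1 / r"] frac_lt_1[of "1 / r"] by (simp add: r_def)
qed

lemma cf_a_ge_1: "cf_a \<alpha> (Suc k) \<ge> 1"
  using cf_rem_bounds[of k] by (simp add: cf_a_def)

lemma inverse_cf_rem: "1 / cf_rem \<alpha> k = cf_a \<alpha> (Suc k) + cf_rem \<alpha> (Suc k)"
  by (simp add: cf_a_def frac_def)

lemma cfQ_mono: "0 \<le> cfQ \<alpha> k \<and> cfQ \<alpha> k \<le> cfQ \<alpha> (Suc k) \<and> 1 \<le> cfQ \<alpha> (Suc k)"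
proof (induction k)
  case (Suc k)
  have "1 * cfQ \<alpha> (Suc k) \<le> cf_a \<alpha> (Suc k) * cfQ \<alpha> (Suc k)"
    using cf_a_ge_1[of k] Suc by (intro mult_right_mono) auto
  then show ?case using Suc by (simp only: cfQ.simps) linarith
qed simp

lemma cfQ_Suc_Suc_ge: "cfQ \<alpha> (Suc k) + cfQ \<alpha> k \<le> cfQ \<alpha> (Suc (Suc k))"
proof -
  have "1 * cfQ \<alpha> (Suc k) \<le> cf_a \<alpha> (Suc k) * cfQ \<alpha> (Suc k)"
    using cf_a_ge_1[of k] cfQ_mono[of k] by (intro mult_right_mono) auto
  then show ?thesis by simp
qed

lemma cfQ_ge_index: "int k \<le> cfQ \<alpha> (Suc k)"
proof (induction k rule: nat_less_induct)
  case (1 k)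
  show ?case
  proof (cases k)
    case (Suc j)
    have "1 \<le> cfQ \<alpha> j \<or> j = 0"
      using cfQ_mono[of "j - 1"] by (cases j) auto
    then show ?thesis
      using 1[rule_format, of j] cfQ_Suc_Suc_ge[of j] cfQ_mono[of j] Suc
      by (auto simp del: cfQ.simps)
  qed simp
qed

lemma cfP_cfQ_det: "cfP \<alpha> (Suc k) * cfQ \<alpha> k - cfP \<alpha> k * cfQ \<alpha> (Suc k) = (-1) ^ Suc k"
  by (induction k) (simp_all add: algebra_simps)

text \<open>In the notation of the convergents:
  \<open>\<alpha> = (p\<^sub>k + r p\<^sub>k\<^sub>-\<^sub>1) / (q\<^sub>k + r q\<^sub>k\<^sub>-\<^sub>1)\<close> with \<open>r = cf_rem \<alpha> k\<close>.\<close>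
lemma cf_complete_quotient:
  "\<alpha> * (cfQ \<alpha> (Suc k) + cfQ \<alpha> k * cf_rem \<alpha> k) = cfP \<alpha> (Suc k) + cfP \<alpha> k * cf_rem \<alpha> k"
proof (induction k)
  case (Suc k)
  define a where "a = real_of_int (cf_a \<alpha> (Suc k))"
  define s where "s = cf_rem \<alpha> (Suc k)"
  have "a \<ge> 1" using cf_a_ge_1[of k] by (simp add: a_def)
  moreover have "s > 0" using cf_rem_bounds[of "Suc k"] unfolding s_def by blast
  ultimately have as: "a + s > 0" by simp
  have "1 / cf_rem \<alpha> k = a + s"
    unfolding a_def s_def by (rule inverse_cf_rem)
  then have "cf_rem \<alpha> k = 1 / (a + s)"
    by (metis div_by_1 divide_divide_eq_right mult_1)
  then have "\<alpha> * (cfQ \<alpha> (Suc k) + cfQ \<alpha> k / (a + s)) = cfP \<alpha> (Suc k) + cfP \<alpha> k / (a + s)"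
    using Suc.IH by simp
  then have "\<alpha> * (cfQ \<alpha> (Suc k) * (a + s) + cfQ \<alpha> k) = cfP \<alpha> (Suc k) * (a + s) + cfP \<alpha> k"
    using as by (simp add: field_simps)
  then show ?case unfolding s_def[symmetric] by (simp add: a_def algebra_simps)
qed simp

lemma cf_error_Suc:
  "\<alpha> * cfQ \<alpha> (Suc k) - cfP \<alpha> (Suc k) = - cf_rem \<alpha> k * (\<alpha> * cfQ \<alpha> k - cfP \<alpha> k)"
  using cf_complete_quotient[of k] by (simp add: algebra_simps)

lemma cf_error_sign: "(-1) ^ k * (\<alpha> * cfQ \<alpha> (Suc k) - cfP \<alpha> (Suc k)) > 0"
proof (induction k)
  case (Suc k)
  have "(-1) ^ Suc k * (\<alpha> * cfQ \<alpha> (Suc (Suc k)) - cfP \<alpha> (Suc (Suc k)))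
      = cf_rem \<alpha> (Suc k) * ((-1) ^ k * (\<alpha> * cfQ \<alpha> (Suc k) - cfP \<alpha> (Suc k)))"
    using cf_error_Suc[of "Suc k"] by (simp only: power_Suc) (simp add: algebra_simps)
  then show ?case using Suc.IH cf_rem_bounds[of "Suc k"] by simp
qed (simp add: alpha_pos)

lemma cf_error_bound:
  "\<bar>\<alpha> * cfQ \<alpha> (Suc k) - cfP \<alpha> (Suc k)\<bar> * cfQ \<alpha> (Suc (Suc k)) \<le> 1"
proof -
  define E where "E = \<alpha> * cfQ \<alpha> (Suc k) - cfP \<alpha> (Suc k)"
  define r where "r = cf_rem \<alpha> (Suc k)"
  have r: "0 < r" using cf_rem_bounds r_def by blast
  have E_Suc: "\<alpha> * cfQ \<alpha> (Suc (Suc k)) - cfP \<alpha> (Suc (Suc k)) = - r * E"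
    unfolding E_def r_def by (rule cf_error_Suc)
  have "E * (cfQ \<alpha> (Suc (Suc k)) + r * cfQ \<alpha> (Suc k))
      = E * cfQ \<alpha> (Suc (Suc k)) - (- r * E) * cfQ \<alpha> (Suc k)"
    by (simp add: algebra_simps)
  also have "\<dots> = E * cfQ \<alpha> (Suc (Suc k)) - (\<alpha> * cfQ \<alpha> (Suc (Suc k)) - cfP \<alpha> (Suc (Suc k))) * cfQ \<alpha> (Suc k)"
    by (simp only: E_Suc)
  also have "\<dots> = real_of_int (cfP \<alpha> (Suc (Suc k)) * cfQ \<alpha> (Suc k) - cfP \<alpha> (Suc k) * cfQ \<alpha> (Suc (Suc k)))"
    unfolding E_def by (simp add: algebra_simps del: cfQ.simps cfP.simps)
  also have "\<bar>\<dots>\<bar> = 1" by (simp only: cfP_cfQ_det) simp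
  finally have "\<bar>E\<bar> * (cfQ \<alpha> (Suc (Suc k)) + r * cfQ \<alpha> (Suc k)) = 1"
    using cfQ_mono[of k] cfQ_mono[of "Suc k"] r by (simp add: abs_mult del: cfQ.simps)
  moreover have "\<bar>E\<bar> * (r * cfQ \<alpha> (Suc k)) \<ge> 0" using cfQ_mono[of k] r by simp
  ultimately show ?thesis unfolding E_def by (simp add: algebra_simps)
qed

lemma conv_q_pos: "0 < conv_q \<alpha> n"
  using cfQ_mono[of n] by (simp add: conv_q_def)

lemma conv_q_ge_index: "int n \<le> conv_q \<alpha> n"
  using cfQ_ge_index[of n] by (simp add: conv_q_def)

lemma conv_q_mono: "conv_q \<alpha> n \<le> conv_q \<alpha> (Suc n)"
  using cfQ_mono[of "Suc n"] by (simp add: conv_q_def)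

lemma conv_det: "conv_p \<alpha> (Suc n) * conv_q \<alpha> n - conv_p \<alpha> n * conv_q \<alpha> (Suc n) = (-1) ^ n"
  using cfP_cfQ_det[of "Suc n"] by (simp add: conv_q_def conv_p_def)

lemma conv_error_bound: "\<bar>\<alpha> * conv_q \<alpha> n - conv_p \<alpha> n\<bar> * conv_q \<alpha> (Suc n) \<le> 1"
  using cf_error_bound[of n] by (simp add: conv_q_def conv_p_def del: cfQ.simps cfP.simps)

lemma conv_even_less: "even n \<Longrightarrow> conv_p \<alpha> n / conv_q \<alpha> n < \<alpha>"
  using cf_error_sign[of n] conv_q_pos[of n]
  by (simp add: conv_q_def conv_p_def divide_less_eq algebra_simps)

lemma conv_odd_greater: "odd n \<Longrightarrow> \<alpha> < conv_p \<alpha> n / conv_q \<alpha> n"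
  using cf_error_sign[of n] conv_q_pos[of n]
  by (simp add: conv_q_def conv_p_def less_divide_eq algebra_simps)

lemma conv_between_denominator:
  assumes "even n" "0 < q"
    and "real_of_int (conv_p \<alpha> n) / real_of_int (conv_q \<alpha> n) < of_int p / of_int q"
    and "of_int p / of_int q < real_of_int (conv_p \<alpha> (Suc n)) / real_of_int (conv_q \<alpha> (Suc n))"
  shows "conv_q \<alpha> n + conv_q \<alpha> (Suc n) \<le> q"
proof (rule farey_neighbours_denominator[OF _ _ _ assms(2-4)])
  show "conv_p \<alpha> (Suc n) * conv_q \<alpha> n - conv_p \<alpha> n * conv_q \<alpha> (Suc n) = 1"
    using conv_det[of n] assms(1) by simp
qed (use conv_q_pos in auto)

lemma conv_Suc_cross_identity:
  assumes "odd n"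
  shows "conv_q \<alpha> (Suc n) * (conv_p \<alpha> n * q - p * conv_q \<alpha> n)
    = conv_q \<alpha> n * (conv_p \<alpha> (Suc n) * q - p * conv_q \<alpha> (Suc n)) + q"
proof -
  have "conv_p \<alpha> n * conv_q \<alpha> (Suc n) - conv_p \<alpha> (Suc n) * conv_q \<alpha> n = 1"
    using conv_det[of n] assms by simp
  moreover have "conv_q \<alpha> (Suc n) * (conv_p \<alpha> n * q - p * conv_q \<alpha> n)
      = conv_q \<alpha> n * (conv_p \<alpha> (Suc n) * q - p * conv_q \<alpha> (Suc n))
        + q * (conv_p \<alpha> n * conv_q \<alpha> (Suc n) - conv_p \<alpha> (Suc n) * conv_q \<alpha> n)"
    by (simp add: algebra_simps)
  ultimately show ?thesis by simp
qed

lemma conv_between_even_denominator: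
  assumes "even n" "0 < q"
    and "real_of_int (conv_p \<alpha> n) / real_of_int (conv_q \<alpha> n) < of_int p / of_int q"
    and "of_int p / of_int q < real_of_int (conv_p \<alpha> (Suc (Suc n))) / real_of_int (conv_q \<alpha> (Suc (Suc n)))"
  shows "conv_q \<alpha> (Suc n) < q"
proof -
  have "of_int p / of_int q < real_of_int (conv_p \<alpha> (Suc n)) / real_of_int (conv_q \<alpha> (Suc n))"
    using assms(1,4) conv_even_less[of "Suc (Suc n)"] conv_odd_greater[of "Suc n"] by simp
  then have "conv_q \<alpha> n + conv_q \<alpha> (Suc n) \<le> q"
    using conv_between_denominator[OF assms(1-3)] by blast
  then show ?thesis using conv_q_pos[of n] by linarith
qed

lemma conv_eq_denominator:
  assumes "0 < q" "of_int p / of_int q = real_of_int (conv_p \<alpha> n) / real_of_int (conv_q \<alpha> n)"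
  shows "conv_q \<alpha> n \<le> q"
proof (rule fraction_eq_denominator_ge[OF _ _ assms])
  show "\<bar>conv_p \<alpha> (Suc n) * conv_q \<alpha> n - conv_p \<alpha> n * conv_q \<alpha> (Suc n)\<bar> = 1"
    using conv_det[of n] by simp
qed (use conv_q_pos in auto)

lemma good_approx_conv_eq:
  assumes "good_approx \<gamma> \<tau> z q p" "0 \<le> \<gamma>" "0 \<le> \<tau>"
    and "of_int p / real q = real_of_int (conv_p \<alpha> n) / real_of_int (conv_q \<alpha> n)"
  shows "\<bar>z - conv_p \<alpha> n / conv_q \<alpha> n\<bar> < \<gamma> / real_of_int (conv_q \<alpha> n) powr (\<tau> + 1)"
proof -
  have "conv_q \<alpha> n \<le> int q"
    using conv_eq_denominator[of "int q" p n] assms(1,4)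
    by (simp add: good_approx_def)
  then have "real_of_int (conv_q \<alpha> n) powr (\<tau> + 1) \<le> real q powr (\<tau> + 1)"
    using conv_q_pos[of n] assms(3)
    by (intro powr_mono2) auto
  then have "\<gamma> / real q powr (\<tau> + 1) \<le> \<gamma> / real_of_int (conv_q \<alpha> n) powr (\<tau> + 1)"
    using conv_q_pos[of n] assms(1,2)
    by (intro divide_left_mono) (auto simp: good_approx_def intro: mult_pos_pos)
  then show ?thesis using assms(1,4) by (simp add: good_approx_def)
qed

lemma conv_q_at_top: "filterlim (\<lambda>m. real_of_int (conv_q \<alpha> m)) at_top sequentially"
proof (rule filterlim_at_top_mono[OF filterlim_real_sequentially always_eventually], intro allI)
  show "real m \<le> real_of_int (conv_q \<alpha> m)" for m
    using conv_q_ge_index[of m] by (metis of_int_le_iff of_int_of_nat_eq)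
qed

lemma eventually_conv_q_large:
  assumes "0 < e" "3 < \<tau>"
  shows "eventually (\<lambda>m. 4 \<le> m \<and> 4 / real_of_int (conv_q \<alpha> m) ^ 2 < e
    \<and> 72 \<le> real_of_int (conv_q \<alpha> m) powr (\<tau> - 3)) sequentially"
proof -
  have "eventually (\<lambda>x::real. 4 / x ^ 2 < e) at_top" "eventually (\<lambda>x::real. 72 \<le> x powr (\<tau> - 3)) at_top"
    using assms by real_asymp+
  then have "eventually (\<lambda>x::real. 4 / x ^ 2 < e \<and> 72 \<le> x powr (\<tau> - 3)) at_top"
    by (rule eventually_conj)
  from eventually_compose_filterlim[OF this conv_q_at_top]
  show ?thesis using eventually_ge_at_top[of 4] by eventually_elim simp
qed

end

lemma conv_q_Suc_le_powr:
  assumes "\<alpha> \<in> Dset \<gamma> \<tau>" "0 < \<gamma>"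
  shows "\<gamma> * conv_q \<alpha> (Suc n) \<le> real_of_int (conv_q \<alpha> n) powr \<tau>"
proof -
  note cf = Dset_bounds(1,2,4)[OF assms]
  define Q where "Q = real_of_int (conv_q \<alpha> n)"
  have Q: "0 < Q" "real (nat (conv_q \<alpha> n)) = Q"
    using conv_q_pos[OF cf, of n] by (simp_all add: Q_def)
  have "\<not> good_approx \<gamma> \<tau> \<alpha> (nat (conv_q \<alpha> n)) (conv_p \<alpha> n)"
    using assms(1) by (simp add: Dset_iff_no_good_approx)
  then have "\<gamma> / Q powr \<tau> \<le> \<bar>\<alpha> * Q - conv_p \<alpha> n\<bar>"
    using conv_q_pos[OF cf, of n] by (simp add: good_approx_iff Q mult.commute not_less)
  moreover have "\<bar>\<alpha> * Q - conv_p \<alpha> n\<bar> * conv_q \<alpha> (Suc n) \<le> 1"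
    using conv_error_bound[OF cf, of n] by (simp add: Q_def)
  ultimately have "\<gamma> / Q powr \<tau> * conv_q \<alpha> (Suc n) \<le> 1"
    using conv_q_pos[OF cf, of "Suc n"] by (smt (verit) mult_right_mono of_int_pos)
  then show ?thesis using Q by (simp add: Q_def field_simps)
qed

section \<open>Covering an interval by short intervals\<close>

lemma interval_cover_length:
  fixes c d :: "'i \<Rightarrow> real"
  assumes "a \<le> b" "{a..b} \<subseteq> (\<Union>i\<in>C. {c i - d i <..< c i + d i})" "\<And>i. i \<in> C \<Longrightarrow> 0 \<le> d i"
  shows "\<exists>J \<subseteq> C. finite J \<and> b - a \<le> (\<Sum>i\<in>J. 2 * d i)"
proof -
  obtain J where J: "J \<subseteq> C" "finite J" and cover: "{a..b} \<subseteq> (\<Union>i\<in>J. {c i - d i <..< c i + d i})"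
    using compactE_image[OF compact_Icc _ assms(2)] by auto
  have d: "\<And>i. i \<in> J \<Longrightarrow> 0 \<le> d i" using J assms(3) by auto
  have "ennreal (b - a) = emeasure lborel {a..b}" using assms(1) by simp
  also have "\<dots> \<le> emeasure lborel (\<Union>i\<in>J. {c i - d i <..< c i + d i})"
  proof (rule emeasure_mono[OF cover])
    have "open (\<Union>i\<in>J. {c i - d i <..< c i + d i})" by auto
    then show "(\<Union>i\<in>J. {c i - d i <..< c i + d i}) \<in> sets lborel" by simp
  qed
  also have "\<dots> \<le> (\<Sum>i\<in>J. emeasure lborel {c i - d i <..< c i + d i})"
    using J by (intro emeasure_subadditive_finite) auto
  also have "\<dots> = (\<Sum>i\<in>J. ennreal (2 * d i))"
    using d by (intro sum.cong) auto
  also have "\<dots> = ennreal (\<Sum>i\<in>J. 2 * d i)"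
    using d by (intro sum_ennreal) auto
  finally have "b - a \<le> (\<Sum>i\<in>J. 2 * d i)"
    using d by (simp add: ennreal_le_iff sum_nonneg)
  then show ?thesis using J by blast
qed

lemma sum_inverse_telescope:
  "1 \<le> M \<Longrightarrow> (\<Sum>q = 2..M. 1 / (real q * (real q - 1))) = 1 - 1 / real M"
proof (induction M rule: dec_induct)
  case (step n)
  have "{2..Suc n} = insert (Suc n) {2..n}" using step by auto
  then have "(\<Sum>q = 2..Suc n. 1 / (real q * (real q - 1))) = 1 / (real (Suc n) * real n) + (1 - 1 / real n)"
    using step by simp
  also have "\<dots> = 1 - 1 / real (Suc n)"
  proof -
    have n: "0 < real n" using step(1) by simp
    then have "0 < real n + real n * real n" by (simp add: add_pos_pos)
    with n show ?thesis by (simp add: field_simps)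
  qed
  finally show ?case .
qed simp

lemma card_int_interval_le:
  assumes "x \<le> y"
  shows "real (card {\<lceil>x\<rceil>..\<lfloor>y\<rfloor>}) \<le> y - x + 1"
proof (cases "0 \<le> \<lfloor>y\<rfloor> - \<lceil>x\<rceil> + 1")
  case True
  have "real_of_int \<lfloor>y\<rfloor> - of_int \<lceil>x\<rceil> \<le> y - x"
    using of_int_floor_le[of y] le_of_int_ceiling[of x] by linarith
  then show ?thesis using True by (simp add: card_atLeastAtMost_int)
qed (use assms in \<open>simp add: card_atLeastAtMost_int\<close>)

lemma sum_over_fractions_in_window:
  fixes w :: "nat \<Rightarrow> real" and J :: "(nat \<times> int) set"
  assumes "finite J" "2 \<le> K" "a \<le> b" "0 \<le> c"
    and J: "J \<subseteq> {(q, p). K \<le> q \<and> p \<in> {\<lceil>real q * a - 1\<rceil>..\<lfloor>real q * b + 1\<rfloor>}}"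
    and w: "\<And>q. K \<le> q \<Longrightarrow> 0 \<le> w q"
      "\<And>q. K \<le> q \<Longrightarrow> (real q * (b - a) + 3) * w q \<le> c / (real q * (real q - 1))"
  shows "(\<Sum>(q, p)\<in>J. w q) \<le> c"
proof -
  define P where "P q = {\<lceil>real q * a - 1\<rceil>..\<lfloor>real q * b + 1\<rfloor>}" for q :: nat
  define M where "M = Max (insert K (fst ` J))"
  have KM: "K \<le> M" unfolding M_def using assms(1) by simp
  have "J \<subseteq> Sigma {K..M} P"
  proof
    fix i assume "i \<in> J"
    moreover have "fst i \<le> M" using \<open>i \<in> J\<close> assms(1) unfolding M_def by (intro Max_ge) auto
    ultimately show "i \<in> Sigma {K..M} P" using J by (auto simp: P_def)
  qed
  then have "(\<Sum>(q, p)\<in>J. w q) \<le> (\<Sum>(q, p)\<in>Sigma {K..M} P. w q)"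
    using w(1) by (intro sum_mono2) (auto simp: P_def)
  also have "\<dots> = (\<Sum>q = K..M. real (card (P q)) * w q)"
    by (simp add: sum.Sigma[symmetric] P_def)
  also have "\<dots> \<le> (\<Sum>q = K..M. c / (real q * (real q - 1)))"
  proof (intro sum_mono)
    fix q assume "q \<in> {K..M}"
    have "real q * a - 1 \<le> real q * b + 1"
      using assms(3) mult_left_mono[of a b "real q"] by simp
    then have "real (card (P q)) \<le> (real q * b + 1) - (real q * a - 1) + 1"
      unfolding P_def by (rule card_int_interval_le)
    then have "real (card (P q)) \<le> real q * (b - a) + 3"
      by (simp add: algebra_simps)
    then show "real (card (P q)) * w q \<le> c / (real q * (real q - 1))"
      using w \<open>q \<in> {K..M}\<close> by (meson atLeastAtMost_iff mult_right_mono order.trans)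
  qed
  also have "\<dots> \<le> (\<Sum>q = 2..M. c / (real q * (real q - 1)))"
    using assms(2,4) by (intro sum_mono2) auto
  also have "\<dots> = c * (\<Sum>q = 2..M. 1 / (real q * (real q - 1)))"
    by (simp add: sum_distrib_left)
  also have "\<dots> = c * (1 - 1 / real M)"
    using sum_inverse_telescope[of M] KM assms(2) by simp
  also have "\<dots> \<le> c" using assms(4) by (simp add: mult_left_le)
  finally show ?thesis .
qed

section \<open>The window below an even convergent\<close>

locale isolated_window =
  fixes \<gamma> \<tau> \<alpha> e :: real and m :: nat
  assumes tau_gt_3: "3 < \<tau>" and gamma_pos: "0 < \<gamma>" and alpha_in_Dset: "\<alpha> \<in> Dset \<gamma> \<tau>"
    and radius_le_alpha: "e \<le> \<alpha>"
    and isolated: "\<And>y. y \<in> Dset \<gamma> \<tau> \<Longrightarrow> \<bar>y - \<alpha>\<bar> < e \<Longrightarrow> y = \<alpha>"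
    and m_even: "even m" and m_ge_4: "4 \<le> m"
    and radius_large: "4 / real_of_int (conv_q \<alpha> m) ^ 2 < e"
    and conv_q_m_large: "72 \<le> real_of_int (conv_q \<alpha> m) powr (\<tau> - 3)"
begin

abbreviation "qm \<equiv> real_of_int (conv_q \<alpha> m)"
abbreviation "pm \<equiv> real_of_int (conv_p \<alpha> m)"
abbreviation "hi \<equiv> pm / qm - \<gamma> / qm powr (\<tau> + 1)"
abbreviation "lo \<equiv> hi - 2 * \<gamma> / qm powr (\<tau> - 1)"
abbreviation "q_min \<equiv> qm powr (\<tau> - 1) / (6 * \<gamma> * qm)"

lemma alpha_bounds: "0 < \<alpha>" "\<alpha> < 1" "\<alpha> \<notin> \<rat>"
  using Dset_bounds[OF alpha_in_Dset gamma_pos] by auto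

lemma gamma_lt_1: "\<gamma> < 1"
  using Dset_bounds[OF alpha_in_Dset gamma_pos] by simp

lemma qm_ge_4: "4 \<le> qm"
  using conv_q_ge_index[OF alpha_bounds, of m] m_ge_4 by simp

lemma qm_powr_ge: "72 * qm ^ 2 \<le> qm powr (\<tau> - 1)"
proof -
  have "qm powr (\<tau> - 1) = qm powr (\<tau> - 3) * qm powr 2"
    by (simp flip: powr_add)
  also have "qm powr 2 = qm ^ 2" using qm_ge_4 by (simp add: powr_realpow)
  finally show ?thesis using conv_q_m_large qm_ge_4 by (simp add: mult_right_mono)
qed

lemma conv_m_less_alpha: "pm / qm < \<alpha>"
  using conv_even_less[OF alpha_bounds m_even] .

lemma alpha_minus_conv_m_le: "\<alpha> - pm / qm \<le> 1 / qm ^ 2"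
proof -
  have pos: "0 < \<alpha> * qm - pm"
    using conv_m_less_alpha qm_ge_4 by (simp add: divide_less_eq algebra_simps)
  have "(\<alpha> * qm - pm) * qm \<le> (\<alpha> * qm - pm) * conv_q \<alpha> (Suc m)"
    using conv_q_mono[OF alpha_bounds, of m] pos by (intro mult_left_mono) auto
  also have "\<dots> \<le> 1" using conv_error_bound[OF alpha_bounds, of m] pos by simp
  finally have "(\<alpha> * qm - pm) * qm \<le> 1" .
  moreover have "\<alpha> - pm / qm = (\<alpha> * qm - pm) * qm / qm ^ 2"
    using qm_ge_4 by (simp add: field_simps power2_eq_square)
  ultimately show ?thesis using qm_ge_4 by (simp add: divide_right_mono)
qed

lemma conv_m_minus_lo_le: "pm / qm - lo \<le> 3 * \<gamma> / qm powr (\<tau> - 1)"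
proof -
  have "qm powr (\<tau> - 1) \<le> qm powr (\<tau> + 1)" using qm_ge_4 by (intro powr_mono) auto
  then have "\<gamma> / qm powr (\<tau> + 1) \<le> \<gamma> / qm powr (\<tau> - 1)"
    using gamma_pos qm_ge_4 by (intro divide_left_mono) auto
  then show ?thesis by simp
qed

lemma conv_m_minus_lo_less: "pm / qm - lo < 1 / (2 * qm ^ 2)"
proof -
  have "3 * \<gamma> * (2 * qm ^ 2) < 72 * qm ^ 2" using gamma_lt_1 gamma_pos qm_ge_4 by simp
  also have "\<dots> \<le> qm powr (\<tau> - 1)" by (rule qm_powr_ge)
  finally have "3 * \<gamma> / qm powr (\<tau> - 1) < 1 / (2 * qm ^ 2)"
    using qm_ge_4 by (simp add: field_simps)
  then show ?thesis using conv_m_minus_lo_le by linarith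
qed

lemma window:
  shows lo_less_hi: "lo < hi" and hi_less_conv_m: "hi < pm / qm"
    and alpha_minus_radius_less_lo: "\<alpha> - e < lo" and lo_pos: "0 < lo"
proof -
  show "lo < hi" "hi < pm / qm" using gamma_pos qm_ge_4 by simp_all
  have "\<alpha> - lo < 1 / qm ^ 2 + 1 / (2 * qm ^ 2)"
    using alpha_minus_conv_m_le conv_m_minus_lo_less by linarith
  also have "\<dots> < 4 / qm ^ 2" using qm_ge_4 by (simp add: field_simps)
  finally show "\<alpha> - e < lo" using radius_large by linarith
  then show "0 < lo" using radius_le_alpha by linarith
qed

lemma window_good_approx:
  assumes "lo \<le> z" "z \<le> hi"
  shows "\<exists>q p. good_approx \<gamma> \<tau> z q p"
proof -
  have z: "0 < z" "z < \<alpha>" using assms window conv_m_less_alpha by linarith+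
  then have "z \<notin> Dset \<gamma> \<tau>"
    using isolated[of z] assms alpha_minus_radius_less_lo by force
  then show ?thesis using z alpha_bounds(2) by (simp add: Dset_iff_no_good_approx)
qed

lemma window_finite_cover:
  obtains J where "finite J"
    "\<And>q p. (q, p) \<in> J \<Longrightarrow> \<exists>z. lo \<le> z \<and> z \<le> hi \<and> good_approx \<gamma> \<tau> z q p"
    "hi - lo \<le> (\<Sum>(q, p)\<in>J. 2 * (\<gamma> / real q powr (\<tau> + 1)))"
proof -
  define C where "C = {(q, p). \<exists>z. lo \<le> z \<and> z \<le> hi \<and> good_approx \<gamma> \<tau> z q p}"
  define c where "c i = of_int (snd i) / real (fst i)" for i :: "nat \<times> int"
  define d where "d i = \<gamma> / real (fst i) powr (\<tau> + 1)" for i :: "nat \<times> int"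
  have "{lo..hi} \<subseteq> (\<Union>i\<in>C. {c i - d i <..< c i + d i})"
  proof
    fix z assume "z \<in> {lo..hi}"
    then obtain q p where approx: "good_approx \<gamma> \<tau> z q p" using window_good_approx[of z] by auto
    then have "(q, p) \<in> C" using \<open>z \<in> {lo..hi}\<close> by (auto simp: C_def)
    moreover have "z \<in> {c (q, p) - d (q, p) <..< c (q, p) + d (q, p)}"
      using approx by (auto simp: c_def d_def good_approx_def abs_less_iff)
    ultimately show "z \<in> (\<Union>i\<in>C. {c i - d i <..< c i + d i})" by blast
  qed
  then have "\<exists>J \<subseteq> C. finite J \<and> hi - lo \<le> (\<Sum>i\<in>J. 2 * d i)"
    using lo_less_hi gamma_pos by (intro interval_cover_length) (auto simp: d_def)
  then show ?thesis using that unfolding C_def d_def by (auto simp: case_prod_beta subset_iff)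
qed

context
  fixes z :: real and q :: nat and p :: int
  assumes z_lo: "lo \<le> z" and z_hi: "z \<le> hi" and approx: "good_approx \<gamma> \<tau> z q p"
begin

lemma approx_q_pos: "0 < real q"
  using approx by (simp add: good_approx_def)

lemma approx_less_alpha: "of_int p / real q < \<alpha>"
proof (rule ccontr)
  assume "\<not> ?thesis"
  moreover have "z < \<alpha>" using z_hi hi_less_conv_m conv_m_less_alpha by linarith
  ultimately have "good_approx \<gamma> \<tau> \<alpha> q p" using approx by (auto simp: good_approx_def)
  then show False using alpha_in_Dset by (simp add: Dset_iff_no_good_approx)
qed

lemma approx_less_conv_m: "of_int p / real q < pm / qm"
proof -
  have "of_int p / real q \<noteq> pm / qm"
  proof
    assume "of_int p / real q = pm / qm"
    then have "\<bar>z - pm / qm\<bar> < \<gamma> / qm powr (\<tau> + 1)"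
      using good_approx_conv_eq[OF alpha_bounds approx] gamma_pos tau_gt_3 by simp
    then show False using z_hi by simp
  qed
  moreover have "\<not> pm / qm < of_int p / real q"
  proof
    assume less: "pm / qm < of_int p / real q"
    show False
    proof (cases "real q \<le> qm")
      case True
      have "1 / qm ^ 2 \<le> 1 / (qm * real q)"
        using True approx_q_pos by (intro divide_left_mono) (auto simp: power2_eq_square)
      also have "\<dots> \<le> \<bar>of_int p / real q - pm / qm\<bar>"
        using fraction_gap[of "int q" "conv_q \<alpha> m" "conv_p \<alpha> m" p] less approx_q_pos
          conv_q_pos[OF alpha_bounds, of m] by simp
      finally show False
        using less alpha_minus_conv_m_le approx_less_alpha by simp
    next
      case False
      have "real q powr \<tau> < \<gamma> * qm"
        using less z_hi hi_less_conv_m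
        by (intro good_approx_fraction_dist[OF approx conv_q_pos[OF alpha_bounds, of m],
            where P = "conv_p \<alpha> m"]) auto
      moreover have "real q ^ 1 \<le> real q powr \<tau>"
        using approx_q_pos False qm_ge_4 tau_gt_3 by (intro powr_ge_power) auto
      ultimately show False using False gamma_lt_1 qm_ge_4
        by (smt (verit) mult_less_cancel_right2 power_one_right)
    qed
  qed
  ultimately show ?thesis by linarith
qed

lemma approx_numerator_nonneg: "0 \<le> p"
proof -
  have "\<bar>real q * z - of_int p\<bar> < 1"
    using good_approx_close[OF approx] gamma_lt_1 tau_gt_3 by simp
  moreover have "0 < real q * z" using approx_q_pos z_lo lo_pos by simp
  ultimately show ?thesis by linarith
qed

lemma approx_numerator_window: "p \<in> {\<lceil>real q * lo - 1\<rceil>..\<lfloor>real q * hi + 1\<rfloor>}"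
proof -
  have "\<bar>real q * z - of_int p\<bar> < 1"
    using good_approx_close[OF approx] gamma_lt_1 tau_gt_3 by simp
  moreover have "real q * lo \<le> real q * z" "real q * z \<le> real q * hi"
    using z_lo z_hi approx_q_pos by simp_all
  ultimately have "real q * lo - 1 \<le> of_int p" "of_int p \<le> real q * hi + 1"
    by (simp_all add: abs_less_iff)
  then show ?thesis by (simp only: atLeastAtMost_iff ceiling_le_iff le_floor_iff)
qed

lemma conv_m_minus_approx:
  "of_int (conv_p \<alpha> m * int q - p * conv_q \<alpha> m) / (real q * qm) = pm / qm - of_int p / real q"
  "pm / qm - of_int p / real q < \<gamma> / real q powr (\<tau> + 1) + (pm / qm - lo)"
proof -
  show "of_int (conv_p \<alpha> m * int q - p * conv_q \<alpha> m) / (real q * qm) = pm / qm - of_int p / real q"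
    using approx_q_pos qm_ge_4 by (simp add: field_simps)
  show "pm / qm - of_int p / real q < \<gamma> / real q powr (\<tau> + 1) + (pm / qm - lo)"
    using approx z_lo by (simp add: good_approx_def abs_less_iff)
qed

lemma conv_m_minus_approx_ge: "1 / (real q * qm) \<le> pm / qm - of_int p / real q"
  using fraction_gap[of "int q" "conv_q \<alpha> m" "conv_p \<alpha> m" p] approx_less_conv_m approx_q_pos
    conv_q_pos[OF alpha_bounds, of m] by (simp add: mult.commute)

lemma approx_conv_m_numerator_pos: "1 \<le> conv_p \<alpha> m * int q - p * conv_q \<alpha> m"
  using approx_less_conv_m approx_q_pos conv_q_pos[OF alpha_bounds, of m]
  by (simp add: of_int_fraction_less_iff[of "int q" "conv_q \<alpha> m" p "conv_p \<alpha> m", simplified])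

lemma large_approx_denominator:
  assumes "qm \<le> real q"
  shows "q_min < real q"
proof -
  note q = approx_q_pos
  have "real q ^ 3 \<le> real q powr \<tau>"
    using assms qm_ge_4 tau_gt_3 by (intro powr_ge_power) auto
  moreover have "16 * real q \<le> real q ^ 3"
    using assms qm_ge_4 mult_mono[of 4 "real q" 4 "real q"] by (simp add: power3_eq_cube)
  moreover have "\<gamma> * qm \<le> 1 * qm"
    using gamma_lt_1 qm_ge_4 by (intro mult_right_mono) auto
  ultimately have "2 * \<gamma> * qm \<le> real q powr \<tau>"
    using assms by linarith
  then have "\<gamma> / real q powr (\<tau> + 1) \<le> 1 / (real q * qm) / 2"
    using q qm_ge_4 gamma_pos by (simp add: powr_add field_simps)
  moreover have "1 / (real q * qm) < \<gamma> / real q powr (\<tau> + 1) + 3 * \<gamma> / qm powr (\<tau> - 1)"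
    using conv_m_minus_approx_ge conv_m_minus_approx(2)
      conv_m_minus_lo_le by linarith
  ultimately have "1 / (real q * qm) / 2 < 3 * \<gamma> / qm powr (\<tau> - 1)" by linarith
  then show ?thesis using q qm_ge_4 gamma_pos by (simp add: field_simps)
qed

lemma approx_numerator_bound:
  assumes "real q < qm"
  shows "of_int (conv_p \<alpha> m * int q - p * conv_q \<alpha> m) * real q powr \<tau> < 2 * \<gamma> * qm"
proof -
  note q = approx_q_pos
  define J where "J = real_of_int (conv_p \<alpha> m * int q - p * conv_q \<alpha> m)"
  have J: "1 \<le> J"
    unfolding J_def of_int_1_le_iff by (rule approx_conv_m_numerator_pos)
  have "pm / qm - lo < 1 / (2 * qm ^ 2)" by (rule conv_m_minus_lo_less)
  also have "\<dots> \<le> 1 / (2 * (real q * qm))"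
    using assms q by (intro divide_left_mono) (auto simp: power2_eq_square)
  also have "\<dots> \<le> J / (2 * (real q * qm))"
    using J q qm_ge_4 by (intro divide_right_mono) auto
  finally have "J / (real q * qm) < \<gamma> / real q powr (\<tau> + 1) + J / (2 * (real q * qm))"
    using conv_m_minus_approx unfolding J_def by linarith
  then have "J / (2 * (real q * qm)) < \<gamma> / (real q * real q powr \<tau>)"
    using q by (simp add: powr_add field_simps)
  then have "J * (real q * real q powr \<tau>) < \<gamma> * (2 * (real q * qm))"
    using q qm_ge_4 by (simp add: pos_divide_less_divide_iff)
  then have "real q * (J * real q powr \<tau>) < real q * (2 * \<gamma> * qm)"
    by (simp add: algebra_simps)
  then have "J * real q powr \<tau> < 2 * \<gamma> * qm" using q by simp
  then show ?thesis unfolding J_def .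
qed

text \<open>With \<open>I, J \<ge> 1\<close> the identity \<open>q\<^sub>m I = q\<^sub>m\<^sub>-\<^sub>1 J + q\<close> gives \<open>q\<^sub>m \<le> 2 q J\<close>,
  which contradicts \<open>J q\<^sup>\<tau> < 2 \<gamma> q\<^sub>m\<close> once \<open>q \<ge> 2\<close>.\<close>
lemma small_approx_denominator_le_conv_pred:
  assumes "real q < qm"
  shows "int q \<le> conv_q \<alpha> (m - 1)"
proof (rule ccontr)
  assume "\<not> ?thesis"
  then have q_gt: "conv_q \<alpha> (m - 1) < int q" by simp
  note q = approx_q_pos
  define n where "n = m - 1"
  have m: "Suc n = m" and n_odd: "odd n" using m_even m_ge_4 by (simp_all add: n_def)
  define J where "J = conv_p \<alpha> m * int q - p * conv_q \<alpha> m"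
  define I where "I = conv_p \<alpha> n * int q - p * conv_q \<alpha> n"
  have J: "1 \<le> J" unfolding J_def using approx_conv_m_numerator_pos .
  have "of_int p / real q < real_of_int (conv_p \<alpha> n) / real_of_int (conv_q \<alpha> n)"
    using approx_less_alpha conv_odd_greater[OF alpha_bounds n_odd] by linarith
  then have "1 \<le> I"
    using q conv_q_pos[OF alpha_bounds, of n] unfolding I_def
    by (simp add: of_int_fraction_less_iff[of "int q" "conv_q \<alpha> n" p "conv_p \<alpha> n", simplified])
  then have "conv_q \<alpha> m \<le> conv_q \<alpha> m * I" using conv_q_pos[OF alpha_bounds, of m] by simp
  also have "\<dots> = conv_q \<alpha> n * J + int q"
    using conv_Suc_cross_identity[OF alpha_bounds n_odd, of "int q" p] unfolding I_def J_def m .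
  also have "\<dots> \<le> 2 * int q * J"
  proof -
    have "conv_q \<alpha> n * J \<le> int q * J" using q_gt J n_def by (intro mult_right_mono) auto
    moreover have "int q \<le> int q * J" using J by (simp add: mult_le_cancel_left1)
    ultimately show ?thesis by linarith
  qed
  finally have "real_of_int (conv_q \<alpha> m) \<le> of_int (2 * int q * J)" by (simp only: of_int_le_iff)
  then have "2 * \<gamma> * qm \<le> 2 * \<gamma> * (2 * real q * of_int J)"
    using gamma_pos by (intro mult_left_mono) auto
  then have "of_int J * real q powr \<tau> < of_int J * (4 * \<gamma> * real q)"
    using approx_numerator_bound[OF assms] unfolding J_def[symmetric] by (simp add: algebra_simps)
  then have "real q powr \<tau> < 4 * \<gamma> * real q"
    using J by (simp add: mult_less_cancel_left_pos)
  also have "\<dots> < 4 * real q" using gamma_lt_1 q by simp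
  finally have "real q powr \<tau> < 4 * real q" .
  moreover have "2 \<le> real q" using q_gt conv_q_pos[OF alpha_bounds, of n] n_def by simp
  then have "4 * real q \<le> real q ^ 3"
    using mult_mono[of 2 "real q" 2 "real q"] by (simp add: power3_eq_cube)
  moreover have "real q ^ 3 \<le> real q powr \<tau>"
    using \<open>2 \<le> real q\<close> tau_gt_3 by (intro powr_ge_power) auto
  ultimately show False by linarith
qed

end

lemma q_min_ge: "12 * qm \<le> q_min"
proof -
  have "12 * qm * (6 * \<gamma> * qm) \<le> 12 * qm * (6 * qm)"
    using gamma_lt_1 qm_ge_4 by (intro mult_left_mono) auto
  also have "\<dots> = 72 * qm ^ 2" by (simp add: power2_eq_square)
  also have "\<dots> \<le> qm powr (\<tau> - 1)" by (rule qm_powr_ge)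
  finally show ?thesis using gamma_pos qm_ge_4 by (simp add: field_simps)
qed

lemma window_term_bound:
  assumes "q_min \<le> real q"
  shows "(real q * (hi - lo) + 3) * (2 * \<gamma> / real q powr (\<tau> + 1))
    \<le> (hi - lo) / 2 / (real q * (real q - 1))"
proof -
  define x where "x = real q"
  define X where "X = x powr (\<tau> + 1)"
  define P where "P = qm powr (\<tau> - 1)"
  have x: "12 * qm \<le> x" using assms q_min_ge by (simp add: x_def)
  then have x48: "48 \<le> x" using qm_ge_4 by linarith
  have P: "0 < P" using qm_ge_4 by (simp add: P_def)
  have X: "0 < X" using x48 by (simp add: X_def)
  have xx: "0 < x * (x - 1)" using x48 by simp
  have a: "8 * \<gamma> * (x ^ 2 * (x - 1)) \<le> X"
    unfolding X_def using x48 tau_gt_3 gamma_pos gamma_lt_1 by (intro cubic_le_powr) auto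
  have b: "12 * (x * (x - 1)) * P \<le> X"
    unfolding X_def P_def using x qm_ge_4 tau_gt_3 by (intro quadratic_powr_le_powr) auto
  define W where "W = 2 * \<gamma> / P"
  have hi_lo: "hi - lo = W" by (simp add: W_def P_def)
  have W: "0 < W" using gamma_pos P by (simp add: W_def)
  have "2 * \<gamma> * x / X \<le> 1 / (4 * (x * (x - 1)))"
    using a X xx by (simp add: pos_divide_le_divide_iff power2_eq_square algebra_simps)
  then have "W * (2 * \<gamma> * x / X) \<le> W * (1 / (4 * (x * (x - 1))))"
    using W by (intro mult_left_mono) auto
  moreover have "\<gamma> * (12 * (x * (x - 1)) * P) \<le> \<gamma> * X"
    using b gamma_pos by (intro mult_left_mono) auto
  then have "3 * (2 * \<gamma>) / X \<le> 2 * \<gamma> / (4 * P * (x * (x - 1)))"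
    using X xx P by (simp add: pos_divide_le_divide_iff algebra_simps)
  ultimately have "W * (2 * \<gamma> * x / X) + 3 * (2 * \<gamma>) / X
      \<le> W * (1 / (4 * (x * (x - 1)))) + 2 * \<gamma> / (4 * P * (x * (x - 1)))"
    by (rule add_mono)
  also have "\<dots> = W / 2 / (x * (x - 1))"
    using P by (simp add: W_def)
  finally have "(x * W + 3) * (2 * \<gamma> / X) \<le> W / 2 / (x * (x - 1))"
    by (simp add: algebra_simps add_divide_distrib)
  then show ?thesis unfolding hi_lo x_def X_def .
qed

end

locale isolated_window_without_convergent = isolated_window +
  assumes no_even_convergent: "\<And>n. n < m \<Longrightarrow> even n \<Longrightarrow>
    real_of_int (conv_p \<alpha> n) / real_of_int (conv_q \<alpha> n) + \<gamma> / real_of_int (conv_q \<alpha> n) powr (\<tau> + 1)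
    < real_of_int (conv_p \<alpha> m) / real_of_int (conv_q \<alpha> m) - \<gamma> / real_of_int (conv_q \<alpha> m) powr (\<tau> + 1)
      - 2 * \<gamma> / real_of_int (conv_q \<alpha> m) powr (\<tau> - 1)"
begin

context
  fixes z :: real and q :: nat and p :: int
  assumes z_lo: "lo \<le> z" and z_hi: "z \<le> hi" and approx: "good_approx \<gamma> \<tau> z q p"
begin

lemma approx_ne_early_even_conv:
  assumes "n < m" "even n"
  shows "of_int p / real q \<noteq> real_of_int (conv_p \<alpha> n) / real_of_int (conv_q \<alpha> n)"
proof
  assume "of_int p / real q = real_of_int (conv_p \<alpha> n) / real_of_int (conv_q \<alpha> n)"
  then have "\<bar>z - conv_p \<alpha> n / conv_q \<alpha> n\<bar> < \<gamma> / real_of_int (conv_q \<alpha> n) powr (\<tau> + 1)"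
    using good_approx_conv_eq[OF alpha_bounds approx] gamma_pos tau_gt_3 by simp
  then show False using no_even_convergent[OF assms] z_lo by linarith
qed

lemma approx_below_early_conv_denominator:
  assumes "Suc (Suc n) < m" "even n"
    and "of_int p / real q < real_of_int (conv_p \<alpha> (Suc (Suc n))) / real_of_int (conv_q \<alpha> (Suc (Suc n)))"
  shows "int q \<le> conv_q \<alpha> (Suc n)"
proof (rule ccontr)
  assume "\<not> ?thesis"
  then have "real_of_int (conv_q \<alpha> (Suc n)) powr \<tau> < real q powr \<tau>"
    using conv_q_pos[OF alpha_bounds, of "Suc n"] tau_gt_3 by (intro powr_less_mono2) auto
  moreover have "0 < \<gamma> / real_of_int (conv_q \<alpha> (Suc (Suc n))) powr (\<tau> + 1)"
    using gamma_pos conv_q_pos[OF alpha_bounds, of "Suc (Suc n)"] by simp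
  then have "real_of_int (conv_p \<alpha> (Suc (Suc n))) / real_of_int (conv_q \<alpha> (Suc (Suc n))) < lo"
    using no_even_convergent[OF assms(1)] assms(2) by simp
  then have "real q powr \<tau> < \<gamma> * conv_q \<alpha> (Suc (Suc n))"
    using assms(3) z_lo
    by (intro good_approx_fraction_dist[OF approx conv_q_pos[OF alpha_bounds, of "Suc (Suc n)"],
          where P = "conv_p \<alpha> (Suc (Suc n))"]) auto
  moreover have "\<gamma> * conv_q \<alpha> (Suc (Suc n)) \<le> real_of_int (conv_q \<alpha> (Suc n)) powr \<tau>"
    by (rule conv_q_Suc_le_powr[OF alpha_in_Dset gamma_pos])
  ultimately show False by simp
qed

lemma small_approx_denominator_absurd:
  assumes "real q < qm"
  shows False
proof -
  define f where "f k = real_of_int (conv_p \<alpha> k) / real_of_int (conv_q \<alpha> k)" for k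
  have "f 0 \<le> of_int p / real q"
    using approx_numerator_nonneg[OF z_lo z_hi approx] by (simp add: f_def conv_p_def conv_q_def)
  moreover have "of_int p / real q < f m"
    using approx_less_conv_m[OF z_lo z_hi approx] by (simp add: f_def)
  ultimately obtain n where n: "even n" "n + 2 \<le> m" "f n \<le> of_int p / real q" "of_int p / real q < f (n + 2)"
    using even_index_crossing m_even by blast
  then have "f n < of_int p / real q"
    using approx_ne_early_even_conv[of n] by (fastforce simp: f_def)
  then have q_gt: "conv_q \<alpha> (Suc n) < int q"
    using conv_between_even_denominator[OF alpha_bounds n(1), of "int q" p] n(4)
      approx_q_pos[OF z_lo z_hi approx] by (simp add: f_def)
  show False
  proof (cases "n + 2 = m")
    case True
    then show False
      using small_approx_denominator_le_conv_pred[OF z_lo z_hi approx assms] q_gt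
      by (simp add: True[symmetric])
  next
    case False
    then show False
      using approx_below_early_conv_denominator[of n] n q_gt by (simp add: f_def)
  qed
qed

lemma approx_denominator_gt_q_min: "q_min < real q"
  using large_approx_denominator[OF z_lo z_hi approx] small_approx_denominator_absurd
  by (cases "qm \<le> real q") auto

end

lemma window_absurd: False
proof -
  define w where "w q = \<gamma> / real q powr (\<tau> + 1)" for q :: nat
  obtain J where J: "finite J" "\<And>q p. (q, p) \<in> J \<Longrightarrow> \<exists>z. lo \<le> z \<and> z \<le> hi \<and> good_approx \<gamma> \<tau> z q p"
    and len: "hi - lo \<le> (\<Sum>(q, p)\<in>J. 2 * w q)"
    using window_finite_cover unfolding w_def by blast
  define K where "K = nat \<lceil>q_min\<rceil>"
  have "(\<Sum>(q, p)\<in>J. 2 * w q) \<le> (hi - lo) / 2"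
  proof (rule sum_over_fractions_in_window[OF J(1)])
    have "2 \<le> q_min" using q_min_ge qm_ge_4 by linarith
    then show "2 \<le> K" unfolding K_def by linarith
    show "J \<subseteq> {(q, p). K \<le> q \<and> p \<in> {\<lceil>real q * lo - 1\<rceil>..\<lfloor>real q * hi + 1\<rfloor>}}"
    proof
      fix i assume "i \<in> J"
      then obtain q p z where i: "i = (q, p)" and approx: "lo \<le> z" "z \<le> hi" "good_approx \<gamma> \<tau> z q p"
        using J(2) by (cases i) blast
      have "K \<le> q"
        using approx_denominator_gt_q_min[OF approx] by (simp add: K_def nat_le_iff ceiling_le_iff)
      then show "i \<in> {(q, p). K \<le> q \<and> p \<in> {\<lceil>real q * lo - 1\<rceil>..\<lfloor>real q * hi + 1\<rfloor>}}"
        using approx_numerator_window[OF approx] i by simp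
    qed
    fix q assume "K \<le> q"
    then have "q_min \<le> real q" by (simp add: K_def nat_le_iff ceiling_le_iff)
    then show "(real q * (hi - lo) + 3) * (2 * w q) \<le> (hi - lo) / 2 / (real q * (real q - 1))"
      using window_term_bound by (simp add: w_def)
  qed (use lo_less_hi gamma_pos in \<open>auto simp: w_def\<close>)
  then show False using len lo_less_hi by (simp add: case_prod_beta)
qed

end

context isolated_window
begin

lemma exists_even_convergent:
  "\<exists>n. even n \<and> n < m \<and>
     real_of_int (conv_p \<alpha> n) / real_of_int (conv_q \<alpha> n) + \<gamma> / real_of_int (conv_q \<alpha> n) powr (\<tau> + 1) \<ge> lo"
proof (rule ccontr)
  assume "\<not> ?thesis"
  then interpret isolated_window_without_convergent \<gamma> \<tau> \<alpha> e m
    by unfold_locales (auto simp: not_le)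
  show False by (rule window_absurd)
qed

end

lemma isolated_in_DsetE:
  assumes "\<alpha> isolated_in Dset \<gamma> \<tau>" "0 < \<gamma>"
  obtains e where "\<alpha> \<in> Dset \<gamma> \<tau>" "0 < e" "e \<le> \<alpha>" "\<And>y. y \<in> Dset \<gamma> \<tau> \<Longrightarrow> \<bar>y - \<alpha>\<bar> < e \<Longrightarrow> y = \<alpha>"
proof -
  have \<alpha>: "\<alpha> \<in> Dset \<gamma> \<tau>" using assms(1) by (auto elim: isolated_inE)
  obtain d where d: "0 < d" "\<And>y. y \<in> Dset \<gamma> \<tau> \<Longrightarrow> dist \<alpha> y < d \<Longrightarrow> y = \<alpha>"
    using isolated_inE_dist[OF assms(1)] by blast
  show ?thesis
  proof (rule that[OF \<alpha>, of "min d \<alpha>"])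
    show "0 < min d \<alpha>" using d(1) Dset_bounds(1)[OF \<alpha> assms(2)] by simp
  qed (use d(2) in \<open>auto simp: dist_real_def abs_minus_commute\<close>)
qed

theorem lemma10:
  fixes \<tau> :: real
  assumes "\<tau> > 3"
  shows "AE \<gamma> in lborel. \<gamma> > 0 \<longrightarrow>
    (\<forall>\<alpha>. \<alpha> isolated_in Dset \<gamma> \<tau> \<longrightarrow>
      (\<exists>N::nat. \<forall>m. even m \<and> m > N \<longrightarrow>
        (\<exists>n. even n \<and> n < m \<and>
          real_of_int (conv_p \<alpha> n) / real_of_int (conv_q \<alpha> n)
            + \<gamma> / real_of_int (conv_q \<alpha> n) powr (\<tau> + 1)
          \<ge> real_of_int (conv_p \<alpha> m) / real_of_int (conv_q \<alpha> m)
            - \<gamma> / real_of_int (conv_q \<alpha> m) powr (\<tau> + 1)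
            - 2 * \<gamma> / real_of_int (conv_q \<alpha> m) powr (\<tau> - 1))))"
proof (rule AE_I2, intro impI allI)
  fix \<gamma> \<alpha> :: real
  assume "0 < \<gamma>" and "\<alpha> isolated_in Dset \<gamma> \<tau>"
  obtain e where \<alpha>: "\<alpha> \<in> Dset \<gamma> \<tau>" and e: "0 < e" "e \<le> \<alpha>"
    and isolated: "\<And>y. y \<in> Dset \<gamma> \<tau> \<Longrightarrow> \<bar>y - \<alpha>\<bar> < e \<Longrightarrow> y = \<alpha>"
    using isolated_in_DsetE[OF \<open>\<alpha> isolated_in Dset \<gamma> \<tau>\<close> \<open>0 < \<gamma>\<close>] by blast
  obtain N where N: "\<And>m. N \<le> m \<Longrightarrow> 4 \<le> m \<and> 4 / real_of_int (conv_q \<alpha> m) ^ 2 < e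
      \<and> 72 \<le> real_of_int (conv_q \<alpha> m) powr (\<tau> - 3)"
    using eventually_conv_q_large[OF Dset_bounds(1,2,4)[OF \<alpha> \<open>0 < \<gamma>\<close>] e(1) assms]
    by (auto simp: eventually_sequentially)
  show "\<exists>N. \<forall>m. even m \<and> N < m \<longrightarrow> (\<exists>n. even n \<and> n < m \<and>
      real_of_int (conv_p \<alpha> m) / real_of_int (conv_q \<alpha> m) - \<gamma> / real_of_int (conv_q \<alpha> m) powr (\<tau> + 1)
        - 2 * \<gamma> / real_of_int (conv_q \<alpha> m) powr (\<tau> - 1)
      \<le> real_of_int (conv_p \<alpha> n) / real_of_int (conv_q \<alpha> n) + \<gamma> / real_of_int (conv_q \<alpha> n) powr (\<tau> + 1))"
  proof (rule exI[of _ N], intro allI impI)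
    fix m assume m: "even m \<and> N < m"
    interpret isolated_window \<gamma> \<tau> \<alpha> e m
      using N[of m] m assms \<open>0 < \<gamma>\<close> \<alpha> e isolated by unfold_locales auto
    show "\<exists>n. even n \<and> n < m \<and> lo \<le> real_of_int (conv_p \<alpha> n) / real_of_int (conv_q \<alpha> n)
        + \<gamma> / real_of_int (conv_q \<alpha> n) powr (\<tau> + 1)"
      by (rule exists_even_convergent)
  qed
qed

end
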